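(* Let $k\ge0$ and let $L$ be a language of pomsets of dimension at most $k$ all having empty source interface. If $L$ is recognizable (there exist a finite category $\mathcal D$, $K\subseteq\mathrm{Mor}(\mathcal D)$ and a functor $F:\mathrm{iiPoms}\to\mathcal D$ with $L=F^{-1}(K)$), then $L$ has a finite coherent presentation, i.e. there exist a finite $\mathrm{iiPoms}_{\le k}$-module $M$, a subset $J\subseteq M$ and a module homomorphism $\varphi:\mathrm{iiPoms}_{\le k}\to M$ with $L=\varphi^{-1}(J)$ such that for every conclist $U$ and all $P,Q\in\mathrm{iiPoms}_{\le k}(\emptyset,U)$: if $\varphi(P)=\varphi(Q)$ then $\varphi(P-A)=\varphi(Q-A)$ for all $A\subseteq U$.
   Context: Fix a finite alphabet $\Sigma$. Pomsets $(P,<,\dashrightarrow,\lambda,S,T)$: $P$ finite, $<$ a strict partial interval order, $\dashrightarrow$ acyclic relating (in one direction) distinct $<$-incomparable elements, $\lambda:P\to\Sigma$, $S$/$T$ sets of $<$-minimal/maximal elements viewed as conclists (finite totally ordered labelled sets); up to isomorphism. $\mathrm{iiPoms}$: category with objects conclists, morphisms $U\to V$ pomsets with source $U$ and target $V$, composition the gluing $P*Q$ (identify $T_P$ with $S_Q$; precedence $<_P\cup<_Q\cup(P\setminus T_P)\times(Q\setminus S_Q)$; event orders, labels united; source $S_P$, target $T_Q$), identities $\mathrm{id}_U=(U,\emptyset,\dashrightarrow,\lambda,U,U)$; $\mathrm{iiPoms}_{\le k}$: pomsets whose $<$-antichains have size $\le k$. For a pomset $P$ and $A\subseteq P$, $P-A$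 is the subpomset induced on $P\setminus A$ (restricted relations, labels and interfaces). A $\mathcal C$-module is a set $M$ with $\mathrm{src},\mathrm{tgt}:M\to\mathrm{Ob}(\mathcal C)$ and actions $M(U,V)\times\mathcal C(V,W)\to M(U,W)$ ($M(U,V)=\mathrm{src}^{-1}(U)\cap\mathrm{tgt}^{-1}(V)$), $m\cdot\alpha$, with $m\cdot\mathrm{id}=m$, $(m\cdot\alpha)\cdot\beta=m\cdot(\alpha\beta)$ (diagrammatic composition); homomorphisms preserve $\mathrm{src},\mathrm{tgt}$ and commute with the action; $\mathrm{iiPoms}_{\le k}$ is a module over itself via gluing. *)

theory Defs
  imports Main
begin

text \<open>A concrete pomset: events, precedence <, event order (dashed arrow), labelling,
  source interface S, target interface T. The category iiPoms has as morphisms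
  isomorphism classes of these; all notions below are isomorphism-invariant or are
  required to be so explicitly.\<close>

record 'a pom =
  ev   :: "nat set"
  prec :: "(nat \<times> nat) set"
  eord :: "(nat \<times> nat) set"
  lab  :: "nat \<Rightarrow> 'a"
  srcI :: "nat set"
  tgtI :: "nat set"

definition wf_pom :: "'a pom \<Rightarrow> bool" where
  "wf_pom P \<longleftrightarrow>
     finite (ev P)
   \<and> prec P \<subseteq> ev P \<times> ev P \<and> irrefl (prec P) \<and> trans (prec P)
   \<and> (\<forall>w x y z. (w,x) \<in> prec P \<and> (y,z) \<in> prec P \<longrightarrow> (w,z) \<in> prec P \<or> (y,x) \<in> prec P)
   \<and> eord P \<subseteq> ev P \<times> ev P \<and> acyclic (eord P)
   \<and> (\<forall>x y. (x,y) \<in> eord P \<longrightarrow> (x,y) \<notin> prec P \<and> (y,x) \<notin> prec P)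
   \<and> (\<forall>x\<in>ev P. \<forall>y\<in>ev P. x \<noteq> y \<and> (x,y) \<notin> prec P \<and> (y,x) \<notin> prec P
        \<longrightarrow> (x,y) \<in> eord P \<or> (y,x) \<in> eord P)
   \<and> srcI P \<subseteq> ev P \<and> (\<forall>x\<in>srcI P. \<forall>y. (y,x) \<notin> prec P)
   \<and> tgtI P \<subseteq> ev P \<and> (\<forall>x\<in>tgtI P. \<forall>y. (x,y) \<notin> prec P)"

definition antichain :: "'a pom \<Rightarrow> nat set \<Rightarrow> bool" where
  "antichain P A \<longleftrightarrow> A \<subseteq> ev P \<and> (\<forall>x\<in>A. \<forall>y\<in>A. (x,y) \<notin> prec P)"

definition dim_le :: "nat \<Rightarrow> 'a pom \<Rightarrow> bool" where
  "dim_le k P \<longleftrightarrow> (\<forall>A. antichain P A \<longrightarrow> card A \<le> k)"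

definition iiP :: "nat \<Rightarrow> 'a pom \<Rightarrow> bool" where
  "iiP k P \<longleftrightarrow> wf_pom P \<and> dim_le k P"

text \<open>A set of events viewed as a conclist: the list of its elements in event order,
  and the corresponding word of labels (conclists up to isomorphism = words).\<close>
definition clist :: "'a pom \<Rightarrow> nat set \<Rightarrow> nat list" where
  "clist P A = (THE xs. distinct xs \<and> set xs = A \<and> sorted_wrt (\<lambda>x y. (x,y) \<in> eord P) xs)"

definition cword :: "'a pom \<Rightarrow> nat set \<Rightarrow> 'a list" where
  "cword P A = map (lab P) (clist P A)"

definition s_word :: "'a pom \<Rightarrow> 'a list" where
  "s_word P = cword P (srcI P)"

definition t_word :: "'a pom \<Rightarrow> 'a list" where
  "t_word P = cword P (tgtI P)"

definition tnth :: "'a pom \<Rightarrow> nat \<Rightarrow> nat" where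
  "tnth P i = clist P (tgtI P) ! i"

definition pom_iso :: "'a pom \<Rightarrow> 'a pom \<Rightarrow> bool" where
  "pom_iso P Q \<longleftrightarrow> (\<exists>f. bij_betw f (ev P) (ev Q)
     \<and> (\<forall>x\<in>ev P. \<forall>y\<in>ev P. ((x,y) \<in> prec P \<longleftrightarrow> (f x, f y) \<in> prec Q)
                        \<and> ((x,y) \<in> eord P \<longleftrightarrow> (f x, f y) \<in> eord Q))
     \<and> (\<forall>x\<in>ev P. lab Q (f x) = lab P x)
     \<and> f ` srcI P = srcI Q \<and> f ` tgtI P = tgtI Q)"

text \<open>Gluing: R is (a representative of) P * Q. P embeds via f, Q via g; the images
  overlap exactly in the identified interfaces T_P = S_Q, identified by an
  event-order and label preserving bijection.\<close>
definition glue :: "'a pom \<Rightarrow> 'a pom \<Rightarrow> 'a pom \<Rightarrow> bool" where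
  "glue P Q R \<longleftrightarrow> (\<exists>f g.
       inj_on f (ev P) \<and> inj_on g (ev Q)
     \<and> ev R = f ` ev P \<union> g ` ev Q
     \<and> f ` ev P \<inter> g ` ev Q = f ` tgtI P
     \<and> f ` ev P \<inter> g ` ev Q = g ` srcI Q
     \<and> (\<forall>x\<in>tgtI P. \<forall>x'\<in>tgtI P. \<forall>y\<in>srcI Q. \<forall>y'\<in>srcI Q.
           f x = g y \<longrightarrow> f x' = g y' \<longrightarrow> ((x,x') \<in> eord P \<longleftrightarrow> (y,y') \<in> eord Q))
     \<and> (\<forall>x\<in>ev P. lab R (f x) = lab P x)
     \<and> (\<forall>y\<in>ev Q. lab R (g y) = lab Q y)
     \<and> prec R = map_prod f f ` prec P \<union> map_prod g g ` prec Q
                 \<union> (f ` (ev P - tgtI P)) \<times> (g ` (ev Q - srcI Q))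
     \<and> eord R = map_prod f f ` eord P \<union> map_prod g g ` eord Q
     \<and> srcI R = f ` srcI P \<and> tgtI R = g ` tgtI Q)"

definition idp :: "'a list \<Rightarrow> 'a pom" where
  "idp U = \<lparr>ev = {..<length U}, prec = {}, eord = {(i,j). i < j \<and> j < length U},
            lab = (\<lambda>i. U ! i), srcI = {..<length U}, tgtI = {..<length U}\<rparr>"

definition pminus :: "'a pom \<Rightarrow> nat set \<Rightarrow> 'a pom" where
  "pminus P A = \<lparr>ev = ev P - A,
                  prec = prec P \<inter> ((ev P - A) \<times> (ev P - A)),
                  eord = eord P \<inter> ((ev P - A) \<times> (ev P - A)),
                  lab = lab P, srcI = srcI P - A, tgtI = tgtI P - A\<rparr>"

text \<open>Composition is diagrammatic: dcomp f g = "first f then g".\<close>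
record ('o, 'm) cat =
  dObj :: "'o set"
  dMor :: "'m set"
  ddom :: "'m \<Rightarrow> 'o"
  dcod :: "'m \<Rightarrow> 'o"
  dcomp :: "'m \<Rightarrow> 'm \<Rightarrow> 'm"
  did :: "'o \<Rightarrow> 'm"

definition category :: "('o, 'm) cat \<Rightarrow> bool" where
  "category D \<longleftrightarrow>
     (\<forall>f\<in>dMor D. ddom D f \<in> dObj D \<and> dcod D f \<in> dObj D)
   \<and> (\<forall>a\<in>dObj D. did D a \<in> dMor D \<and> ddom D (did D a) = a \<and> dcod D (did D a) = a)
   \<and> (\<forall>f\<in>dMor D. \<forall>g\<in>dMor D. dcod D f = ddom D g \<longrightarrow>
        dcomp D f g \<in> dMor D \<and> ddom D (dcomp D f g) = ddom D f \<and> dcod D (dcomp D f g) = dcod D g)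
   \<and> (\<forall>f\<in>dMor D. dcomp D (did D (ddom D f)) f = f \<and> dcomp D f (did D (dcod D f)) = f)
   \<and> (\<forall>f\<in>dMor D. \<forall>g\<in>dMor D. \<forall>h\<in>dMor D. dcod D f = ddom D g \<longrightarrow> dcod D g = ddom D h \<longrightarrow>
        dcomp D (dcomp D f g) h = dcomp D f (dcomp D g h))"

definition finite_category :: "('o, 'm) cat \<Rightarrow> bool" where
  "finite_category D \<longleftrightarrow> category D \<and> finite (dObj D) \<and> finite (dMor D)"

text \<open>A functor iiPoms -> D: objects of iiPoms are conclists (words), morphisms are
  isomorphism classes of pomsets; Fm is required to be isomorphism-invariant.\<close>
definition iiPoms_functor :: "('o, 'm) cat \<Rightarrow> ('a list \<Rightarrow> 'o) \<Rightarrow> ('a pom \<Rightarrow> 'm) \<Rightarrow> bool" where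
  "iiPoms_functor D Fo Fm \<longleftrightarrow>
     (\<forall>U. Fo U \<in> dObj D)
   \<and> (\<forall>P. wf_pom P \<longrightarrow> Fm P \<in> dMor D \<and> ddom D (Fm P) = Fo (s_word P) \<and> dcod D (Fm P) = Fo (t_word P))
   \<and> (\<forall>P Q. wf_pom P \<and> wf_pom Q \<and> pom_iso P Q \<longrightarrow> Fm P = Fm Q)
   \<and> (\<forall>U. Fm (idp U) = did D (Fo U))
   \<and> (\<forall>P Q R. wf_pom P \<and> wf_pom Q \<and> wf_pom R \<and> glue P Q R \<longrightarrow> Fm R = dcomp D (Fm P) (Fm Q))"

text \<open>Objects of iiPoms_{<=k}: conclists of size at most k.\<close>
definition iiPoms_module ::
  "nat \<Rightarrow> 'b set \<Rightarrow> ('b \<Rightarrow> 'a list) \<Rightarrow> ('b \<Rightarrow> 'a list) \<Rightarrow> ('b \<Rightarrow> 'a pom \<Rightarrow> 'b) \<Rightarrow> bool" where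
  "iiPoms_module k M msrc mtgt act \<longleftrightarrow>
     (\<forall>m\<in>M. length (msrc m) \<le> k \<and> length (mtgt m) \<le> k)
   \<and> (\<forall>m\<in>M. \<forall>\<alpha>. iiP k \<alpha> \<and> s_word \<alpha> = mtgt m \<longrightarrow>
        act m \<alpha> \<in> M \<and> msrc (act m \<alpha>) = msrc m \<and> mtgt (act m \<alpha>) = t_word \<alpha>)
   \<and> (\<forall>m\<in>M. \<forall>\<alpha> \<beta>. iiP k \<alpha> \<and> iiP k \<beta> \<and> s_word \<alpha> = mtgt m \<and> pom_iso \<alpha> \<beta> \<longrightarrow> act m \<alpha> = act m \<beta>)
   \<and> (\<forall>m\<in>M. act m (idp (mtgt m)) = m)
   \<and> (\<forall>m\<in>M. \<forall>\<alpha> \<beta> \<gamma>. iiP k \<alpha> \<and> iiP k \<beta> \<and> iiP k \<gamma> \<and> s_word \<alpha> = mtgt m \<and> s_word \<beta> = t_word \<alpha>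
        \<and> glue \<alpha> \<beta> \<gamma> \<longrightarrow> act (act m \<alpha>) \<beta> = act m \<gamma>)"

text \<open>Module homomorphism from iiPoms_{<=k} (acting on itself by gluing) into M.\<close>
definition iiPoms_module_hom ::
  "nat \<Rightarrow> 'b set \<Rightarrow> ('b \<Rightarrow> 'a list) \<Rightarrow> ('b \<Rightarrow> 'a list) \<Rightarrow> ('b \<Rightarrow> 'a pom \<Rightarrow> 'b) \<Rightarrow> ('a pom \<Rightarrow> 'b) \<Rightarrow> bool" where
  "iiPoms_module_hom k M msrc mtgt act \<phi> \<longleftrightarrow>
     (\<forall>P. iiP k P \<longrightarrow> \<phi> P \<in> M \<and> msrc (\<phi> P) = s_word P \<and> mtgt (\<phi> P) = t_word P)
   \<and> (\<forall>P Q. iiP k P \<and> iiP k Q \<and> pom_iso P Q \<longrightarrow> \<phi> P = \<phi> Q)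
   \<and> (\<forall>P \<alpha> R. iiP k P \<and> iiP k \<alpha> \<and> iiP k R \<and> s_word \<alpha> = t_word P \<and> glue P \<alpha> R
        \<longrightarrow> \<phi> R = act (\<phi> P) \<alpha>)"

end

theory Submission
  imports Defs "HOL-Library.FuncSet"
begin

text \<open>The profile of a pomset \<open>P\<close> records its interfaces and, for every set \<open>I\<close> of
  target positions, the morphism \<open>F (P - T\<^sub>P[I])\<close>. Removing target events from a gluing
  \<open>P * \<alpha>\<close> removes from \<open>P\<close> exactly the target events glued to them, so
  \<open>(P * \<alpha>) - Y = (P - X) * (\<alpha> - Y)\<close> and, \<open>F\<close> being a functor, the profile of \<open>P * \<alpha>\<close>
  is computed from the profile of \<open>P\<close> and from \<open>\<alpha>\<close> alone. Hence profiles form a module over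
  \<open>iiPoms\<^sub>\<le>\<^sub>k\<close> on which the profile map is a homomorphism. There are finitely many
  profiles because the alphabet, the interface lengths and \<open>D\<close> are finite; \<open>L\<close> is read
  off at \<open>I = {}\<close>, and the profile of \<open>P - T\<^sub>P[I]\<close> is determined by that of \<open>P\<close>,
  which is coherence.\<close>

section \<open>Lists and relations\<close>

lemma acyclic_asym: "acyclic r \<Longrightarrow> (x, y) \<in> r \<Longrightarrow> (y, x) \<notin> r"
  by (meson acyclic_def r_into_trancl' trancl_trans)

lemma sorted_wrt_distinct_set_unique:
  assumes asym: "\<And>x y. R x y \<Longrightarrow> \<not> R y x"
    and "sorted_wrt R xs" "sorted_wrt R ys" "distinct xs" "distinct ys" "set xs = set ys"
  shows "xs = ys"
  using assms(2-)
proof (induction xs arbitrary: ys)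
  case Nil
  then show ?case by simp
next
  case (Cons x xs)
  then obtain y ys' where ys: "ys = y # ys'"
    by (cases ys) auto
  have "x = y"
  proof (rule ccontr)
    assume "x \<noteq> y"
    then have "y \<in> set xs" "x \<in> set ys'"
      using Cons.prems(5) ys by auto
    then have "R x y" "R y x"
      using Cons.prems(1,2) ys by auto
    then show False
      using asym by blast
  qed
  moreover have "set xs = set ys'"
    using Cons.prems(3-5) ys \<open>x = y\<close> by (metis Diff_insert_absorb distinct.simps(2) list.simps(15))
  ultimately show ?case
    using Cons ys by simp
qed

lemma sorted_wrt_list_of_set_exists:
  assumes "wf r" "finite A" "\<And>x y. x \<in> A \<Longrightarrow> y \<in> A \<Longrightarrow> x \<noteq> y \<Longrightarrow> (x, y) \<in> r \<or> (y, x) \<in> r"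
  shows "\<exists>xs. distinct xs \<and> set xs = A \<and> sorted_wrt (\<lambda>x y. (x, y) \<in> r) xs"
  using assms(2,3)
proof (induction A rule: finite_psubset_induct)
  case (psubset A)
  show ?case
  proof (cases "A = {}")
    case True
    then show ?thesis by simp
  next
    case False
    then obtain z where z: "z \<in> A" and z_min: "\<And>y. (y, z) \<in> r \<Longrightarrow> y \<notin> A"
      using wfE_min'[OF assms(1)] by metis
    obtain xs where xs: "distinct xs" "set xs = A - {z}" "sorted_wrt (\<lambda>x y. (x, y) \<in> r) xs"
      using psubset.IH[of "A - {z}"] psubset.prems z by blast
    have "\<forall>y\<in>set xs. (z, y) \<in> r"
      using xs(2) psubset.prems z z_min by blast
    then show ?thesis
      using xs z by (intro exI[of _ "z # xs"]) auto
  qed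
qed

definition positions :: "'b list \<Rightarrow> 'b set \<Rightarrow> nat set" where
  "positions xs Y = {i. i < length xs \<and> xs ! i \<in> Y}"

definition positions_outside :: "nat set \<Rightarrow> nat \<Rightarrow> nat list" where
  "positions_outside I n = filter (\<lambda>i. i \<notin> I) [0..<n]"

definition del_positions :: "nat set \<Rightarrow> 'b list \<Rightarrow> 'b list" where
  "del_positions I xs = map ((!) xs) (positions_outside I (length xs))"

lemma positions_subset: "positions xs Y \<subseteq> {..<length xs}"
  unfolding positions_def by auto

lemma positions_nth_image:
  assumes "distinct xs" "I \<subseteq> {..<length xs}"
  shows "positions xs ((!) xs ` I) = I"
  using assms nth_eq_iff_index_eq unfolding positions_def by fastforce

lemma positions_map:
  assumes "\<And>x. x \<in> set xs \<Longrightarrow> f x \<in> Z \<longleftrightarrow> x \<in> Y"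
  shows "positions (map f xs) Z = positions xs Y"
  using assms unfolding positions_def by auto

lemma del_positions_map: "del_positions I (map f xs) = map f (del_positions I xs)"
  unfolding del_positions_def positions_outside_def by simp

lemma length_del_positions: "length (del_positions I xs) = length (positions_outside I (length xs))"
  unfolding del_positions_def by simp

lemma nth_del_positions:
  "j < length (del_positions I xs) \<Longrightarrow> del_positions I xs ! j = xs ! (positions_outside I (length xs) ! j)"
  unfolding del_positions_def by simp

lemma positions_outside_nth_less:
  "j < length (positions_outside I n) \<Longrightarrow> positions_outside I n ! j < n"
  unfolding positions_outside_def using nth_mem by fastforce

lemma filter_notin_eq_del_positions:
  "filter (\<lambda>x. x \<notin> Y) xs = del_positions (positions xs Y) xs"
proof -
  have "filter (\<lambda>x. x \<notin> Y) xs = map ((!) xs) (filter (\<lambda>i. xs ! i \<notin> Y) [0..<length xs])"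
    by (subst map_nth[symmetric]) (simp add: filter_map comp_def)
  also have "filter (\<lambda>i. xs ! i \<notin> Y) [0..<length xs] = positions_outside (positions xs Y) (length xs)"
    unfolding positions_outside_def positions_def by (rule filter_cong) auto
  finally show ?thesis
    unfolding del_positions_def .
qed

section \<open>Conclists\<close>

lemma wf_pomD:
  assumes "wf_pom P"
  shows "finite (ev P)" "prec P \<subseteq> ev P \<times> ev P" "irrefl (prec P)" "trans (prec P)"
    "\<And>w x y z. (w, x) \<in> prec P \<Longrightarrow> (y, z) \<in> prec P \<Longrightarrow> (w, z) \<in> prec P \<or> (y, x) \<in> prec P"
    "eord P \<subseteq> ev P \<times> ev P" "acyclic (eord P)"
    "\<And>x y. (x, y) \<in> eord P \<Longrightarrow> (x, y) \<notin> prec P \<and> (y, x) \<notin> prec P"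
    "\<And>x y. x \<in> ev P \<Longrightarrow> y \<in> ev P \<Longrightarrow> x \<noteq> y \<Longrightarrow> (x, y) \<notin> prec P \<Longrightarrow> (y, x) \<notin> prec P
       \<Longrightarrow> (x, y) \<in> eord P \<or> (y, x) \<in> eord P"
    "srcI P \<subseteq> ev P" "\<And>x y. x \<in> srcI P \<Longrightarrow> (y, x) \<notin> prec P"
    "tgtI P \<subseteq> ev P" "\<And>x y. x \<in> tgtI P \<Longrightarrow> (x, y) \<notin> prec P"
  using assms unfolding wf_pom_def by blast+

lemma wf_pom_finite_eord:
  assumes "wf_pom P"
  shows "finite (eord P)"
  by (rule finite_subset[OF wf_pomD(6)[OF assms]]) (simp add: wf_pomD(1)[OF assms])

lemma wf_pom_acyclic_eord: "wf_pom P \<Longrightarrow> acyclic (eord P)"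
  by (rule wf_pomD(7))

lemma srcI_subset_ev: "wf_pom P \<Longrightarrow> srcI P \<subseteq> ev P"
  by (rule wf_pomD(10))

lemma tgtI_subset_ev: "wf_pom P \<Longrightarrow> tgtI P \<subseteq> ev P"
  by (rule wf_pomD(12))

lemma antichain_srcI: "wf_pom P \<Longrightarrow> antichain P (srcI P)"
  unfolding wf_pom_def antichain_def by blast

lemma antichain_tgtI: "wf_pom P \<Longrightarrow> antichain P (tgtI P)"
  unfolding wf_pom_def antichain_def by blast

lemma clist_eqI:
  assumes "acyclic (eord P)" "distinct xs" "set xs = A" "sorted_wrt (\<lambda>x y. (x, y) \<in> eord P) xs"
  shows "clist P A = xs"
  unfolding clist_def
proof (rule the_equality)
  fix ys
  assume "distinct ys \<and> set ys = A \<and> sorted_wrt (\<lambda>x y. (x, y) \<in> eord P) ys"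
  then show "ys = xs"
    using sorted_wrt_distinct_set_unique[of "\<lambda>x y. (x, y) \<in> eord P"] acyclic_asym[OF assms(1)] assms
    by metis
qed (use assms in simp)

lemma clist_empty [simp]: "clist P {} = []"
  unfolding clist_def by (rule the_equality) auto

lemma clist_correct:
  assumes "wf_pom P" "antichain P A"
  shows "distinct (clist P A)" "set (clist P A) = A" "sorted_wrt (\<lambda>x y. (x, y) \<in> eord P) (clist P A)"
proof -
  have "finite A"
    using assms(2) wf_pomD(1)[OF assms(1)] finite_subset unfolding antichain_def by blast
  moreover have "(x, y) \<in> eord P \<or> (y, x) \<in> eord P" if "x \<in> A" "y \<in> A" "x \<noteq> y" for x y
    using assms(2) wf_pomD(9)[OF assms(1)] that unfolding antichain_def by blast
  moreover have "wf (eord P)"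
    using finite_acyclic_wf[OF wf_pom_finite_eord[OF assms(1)] wf_pom_acyclic_eord[OF assms(1)]] .
  ultimately obtain xs where "distinct xs" "set xs = A" "sorted_wrt (\<lambda>x y. (x, y) \<in> eord P) xs"
    using sorted_wrt_list_of_set_exists by blast
  moreover from this have "clist P A = xs"
    using clist_eqI assms(1) wf_pom_acyclic_eord by blast
  ultimately show "distinct (clist P A)" "set (clist P A) = A" "sorted_wrt (\<lambda>x y. (x, y) \<in> eord P) (clist P A)"
    by simp_all
qed

lemma clist_image:
  assumes "wf_pom P" "antichain P A" "acyclic (eord Q)" "inj_on h A"
    and "\<And>x y. x \<in> A \<Longrightarrow> y \<in> A \<Longrightarrow> (x, y) \<in> eord P \<Longrightarrow> (h x, h y) \<in> eord Q"
  shows "clist Q (h ` A) = map h (clist P A)"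
  using clist_correct[OF assms(1,2)] assms(3-)
  by (intro clist_eqI) (auto simp: distinct_map sorted_wrt_map elim: sorted_wrt_mono_rel[rotated])

lemma length_cword_le:
  assumes "iiP k P" "antichain P A"
  shows "length (cword P A) \<le> k"
  using assms distinct_card[OF clist_correct(1)] clist_correct(2)
  unfolding iiP_def dim_le_def cword_def by (metis length_map)

lemma length_s_word_le: "iiP k P \<Longrightarrow> length (s_word P) \<le> k"
  unfolding s_word_def using length_cword_le antichain_srcI iiP_def by blast

lemma length_t_word_le: "iiP k P \<Longrightarrow> length (t_word P) \<le> k"
  unfolding t_word_def using length_cword_le antichain_tgtI iiP_def by blast

lemma s_word_eq_Nil_iff: "wf_pom P \<Longrightarrow> s_word P = [] \<longleftrightarrow> srcI P = {}"
  using clist_correct(2)[OF _ antichain_srcI] unfolding s_word_def cword_def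
  by (metis Nil_is_map_conv set_empty)

section \<open>Removing events\<close>

lemma wf_pom_pminus:
  assumes "wf_pom P"
  shows "wf_pom (pminus P X)"
proof -
  let ?S = "ev P - X"
  note wf = wf_pomD[OF assms]
  have "irrefl (prec P \<inter> ?S \<times> ?S)" "trans (prec P \<inter> ?S \<times> ?S)"
    using wf(3,4) unfolding irrefl_def trans_def by blast+
  moreover have "acyclic (eord P \<inter> ?S \<times> ?S)"
    using wf(7) acyclic_subset by (meson inf_le1)
  ultimately show ?thesis
    unfolding wf_pom_def pminus_def pom.simps
    using wf(1,5,8-13) by (intro conjI; (assumption | (simp; fail) | blast))
qed

lemma pminus_pminus: "pminus (pminus P X) Y = pminus P (X \<union> Y)"
  unfolding pminus_def by auto

lemma pminus_empty: "wf_pom P \<Longrightarrow> pminus P {} = P"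
  unfolding pminus_def wf_pom_def by (auto simp: Int_absorb2)

lemma clist_pminus:
  assumes "wf_pom P" "antichain P A"
  shows "clist (pminus P X) (A - X) = filter (\<lambda>x. x \<notin> X) (clist P A)"
proof (rule clist_eqI)
  show "acyclic (eord (pminus P X))"
    using wf_pom_acyclic_eord[OF wf_pom_pminus[OF assms(1)]] .
  have "sorted_wrt (\<lambda>x y. (x, y) \<in> eord P) (filter (\<lambda>x. x \<notin> X) (clist P A))"
    using clist_correct(3)[OF assms] sorted_wrt_filter by blast
  then show "sorted_wrt (\<lambda>x y. (x, y) \<in> eord (pminus P X)) (filter (\<lambda>x. x \<notin> X) (clist P A))"
    by (rule sorted_wrt_mono_rel[rotated])
      (use clist_correct(2)[OF assms] assms(2) in \<open>auto simp: pminus_def antichain_def\<close>)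
qed (use clist_correct[OF assms] in auto)

lemma cword_pminus:
  assumes "wf_pom P" "antichain P A"
  shows "cword (pminus P Y) (A - Y) = del_positions (positions (clist P A) Y) (cword P A)"
  unfolding cword_def clist_pminus[OF assms] filter_notin_eq_del_positions del_positions_map
  by (simp add: pminus_def)

lemma s_word_pminus:
  "wf_pom P \<Longrightarrow> s_word (pminus P Y) = del_positions (positions (clist P (srcI P)) Y) (s_word P)"
  using cword_pminus[OF _ antichain_srcI] unfolding s_word_def by (simp add: pminus_def)

lemma length_t_word: "length (t_word P) = length (clist P (tgtI P))"
  unfolding t_word_def cword_def by simp

lemma tnth_image: "tnth P ` I = (!) (clist P (tgtI P)) ` I"
  unfolding tnth_def by auto

lemma tnth_image_subset:
  "wf_pom P \<Longrightarrow> I \<subseteq> {..<length (t_word P)} \<Longrightarrow> tnth P ` I \<subseteq> tgtI P"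
  using clist_correct(2)[OF _ antichain_tgtI] nth_mem unfolding tnth_image length_t_word by blast

lemma tnth_image_subset_ev:
  "wf_pom P \<Longrightarrow> I \<subseteq> {..<length (t_word P)} \<Longrightarrow> tnth P ` I \<subseteq> ev P"
  using tnth_image_subset tgtI_subset_ev by blast

lemma clist_tgtI_pminus:
  assumes "wf_pom P" "I \<subseteq> {..<length (t_word P)}"
  shows "clist (pminus P (tnth P ` I)) (tgtI (pminus P (tnth P ` I))) = del_positions I (clist P (tgtI P))"
  using clist_pminus[OF assms(1) antichain_tgtI[OF assms(1)]] assms(2)
    positions_nth_image[OF clist_correct(1)[OF assms(1) antichain_tgtI[OF assms(1)]]]
  unfolding filter_notin_eq_del_positions tnth_image length_t_word by (simp add: pminus_def)

lemma t_word_pminus: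
  assumes "wf_pom P" "I \<subseteq> {..<length (t_word P)}"
  shows "t_word (pminus P (tnth P ` I)) = del_positions I (t_word P)"
  using clist_tgtI_pminus[OF assms] unfolding t_word_def cword_def del_positions_map
  by (simp add: pminus_def)

lemma tnth_pminus:
  assumes "wf_pom P" "I \<subseteq> {..<length (t_word P)}" "j < length (del_positions I (t_word P))"
  shows "tnth (pminus P (tnth P ` I)) j = tnth P (positions_outside I (length (t_word P)) ! j)"
  using assms clist_tgtI_pminus[OF assms(1,2)] nth_del_positions
  unfolding tnth_def length_t_word length_del_positions by metis

section \<open>Isomorphisms and identities\<close>

locale pom_isomorphism =
  fixes h :: "nat \<Rightarrow> nat" and P Q :: "'a pom"
  assumes wf_P: "wf_pom P" and wf_Q: "wf_pom Q"
    and bij: "bij_betw h (ev P) (ev Q)"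
    and prec_iff: "\<And>x y. x \<in> ev P \<Longrightarrow> y \<in> ev P \<Longrightarrow> (h x, h y) \<in> prec Q \<longleftrightarrow> (x, y) \<in> prec P"
    and eord_iff: "\<And>x y. x \<in> ev P \<Longrightarrow> y \<in> ev P \<Longrightarrow> (h x, h y) \<in> eord Q \<longleftrightarrow> (x, y) \<in> eord P"
    and lab_eq: "\<And>x. x \<in> ev P \<Longrightarrow> lab Q (h x) = lab P x"
    and srcI_eq: "h ` srcI P = srcI Q"
    and tgtI_eq: "h ` tgtI P = tgtI Q"

lemma pom_isoE:
  assumes "wf_pom P" "wf_pom Q" "pom_iso P Q"
  obtains h where "pom_isomorphism h P Q"
proof -
  from assms(3) obtain h where "bij_betw h (ev P) (ev Q)"
    and "\<forall>x\<in>ev P. \<forall>y\<in>ev P. ((x, y) \<in> prec P \<longleftrightarrow> (h x, h y) \<in> prec Q)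
                        \<and> ((x, y) \<in> eord P \<longleftrightarrow> (h x, h y) \<in> eord Q)"
    and "\<forall>x\<in>ev P. lab Q (h x) = lab P x" "h ` srcI P = srcI Q" "h ` tgtI P = tgtI Q"
    unfolding pom_iso_def by (elim exE conjE) (rule that; assumption)
  then have "pom_isomorphism h P Q"
    using assms(1,2) by unfold_locales auto
  then show thesis ..
qed

context pom_isomorphism
begin

lemma pom_iso: "pom_iso P Q"
  unfolding pom_iso_def using bij prec_iff eord_iff lab_eq srcI_eq tgtI_eq
  by (intro exI[of _ h]) auto

lemma inj: "inj_on h (ev P)"
  using bij bij_betw_imp_inj_on by blast

lemma clist_eq:
  assumes "antichain P A"
  shows "clist Q (h ` A) = map h (clist P A)"
proof (rule clist_image[OF wf_P assms wf_pom_acyclic_eord[OF wf_Q]])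
  have "A \<subseteq> ev P"
    using assms unfolding antichain_def by blast
  then show "inj_on h A"
    using inj inj_on_subset by blast
  show "(h x, h y) \<in> eord Q" if "x \<in> A" "y \<in> A" "(x, y) \<in> eord P" for x y
    using that eord_iff \<open>A \<subseteq> ev P\<close> by blast
qed

lemma clist_srcI: "clist Q (srcI Q) = map h (clist P (srcI P))"
  using clist_eq[OF antichain_srcI[OF wf_P]] unfolding srcI_eq .

lemma clist_tgtI: "clist Q (tgtI Q) = map h (clist P (tgtI P))"
  using clist_eq[OF antichain_tgtI[OF wf_P]] unfolding tgtI_eq .

lemma cword_eq:
  assumes "antichain P A"
  shows "cword Q (h ` A) = cword P A"
proof -
  have "\<forall>x\<in>set (clist P A). lab Q (h x) = lab P x"
    using clist_correct(2)[OF wf_P assms] assms lab_eq unfolding antichain_def by blast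
  then show ?thesis
    unfolding cword_def clist_eq[OF assms] by simp
qed

lemma s_word_eq: "s_word Q = s_word P"
  using cword_eq[OF antichain_srcI[OF wf_P]] unfolding s_word_def srcI_eq .

lemma t_word_eq: "t_word Q = t_word P"
  using cword_eq[OF antichain_tgtI[OF wf_P]] unfolding t_word_def tgtI_eq .

lemma tnth_image:
  assumes "I \<subseteq> {..<length (t_word P)}"
  shows "tnth Q ` I = h ` tnth P ` I"
proof -
  have "tnth Q i = h (tnth P i)" if "i \<in> I" for i
    using that assms unfolding tnth_def clist_tgtI length_t_word by auto
  then show ?thesis
    by (simp add: image_image)
qed

lemma pminus:
  assumes "X \<subseteq> ev P"
  shows "pom_isomorphism h (pminus P X) (pminus Q (h ` X))"
proof -
  have diff: "h ` (A - X) = h ` A - h ` X" if "A \<subseteq> ev P" for A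
    by (rule inj_on_image_set_diff[OF inj]) (use that assms in auto)
  have bij_diff: "bij_betw h (ev P - X) (ev Q - h ` X)"
    using diff[of "ev P"] bij inj_on_diff unfolding bij_betw_def by auto
  have h_mem: "h x \<in> ev Q - h ` X" if "x \<in> ev P - X" for x
    by (rule bij_betw_apply[OF bij_diff that])
  show ?thesis
  proof
    show "wf_pom (pminus P X)" "wf_pom (pminus Q (h ` X))"
      using wf_pom_pminus wf_P wf_Q by blast+
    show "bij_betw h (ev (pminus P X)) (ev (pminus Q (h ` X)))"
      using bij_diff by (simp add: pminus_def)
    show "h ` srcI (pminus P X) = srcI (pminus Q (h ` X))"
      using diff[OF srcI_subset_ev[OF wf_P]] srcI_eq by (simp add: pminus_def)
    show "h ` tgtI (pminus P X) = tgtI (pminus Q (h ` X))"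
      using diff[OF tgtI_subset_ev[OF wf_P]] tgtI_eq by (simp add: pminus_def)
    fix x y
    assume "x \<in> ev (pminus P X)" "y \<in> ev (pminus P X)"
    then have "x \<in> ev P - X" "y \<in> ev P - X"
      by (simp_all add: pminus_def)
    then show "(h x, h y) \<in> prec (pminus Q (h ` X)) \<longleftrightarrow> (x, y) \<in> prec (pminus P X)"
      and "(h x, h y) \<in> eord (pminus Q (h ` X)) \<longleftrightarrow> (x, y) \<in> eord (pminus P X)"
      and "lab (pminus Q (h ` X)) (h x) = lab (pminus P X) x"
      using h_mem prec_iff eord_iff lab_eq by (simp_all add: pminus_def)
  qed
qed

lemma pminus_tnth:
  assumes "I \<subseteq> {..<length (t_word P)}"
  shows "pom_isomorphism h (pminus P (tnth P ` I)) (pminus Q (tnth Q ` I))"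
  using pminus[OF tnth_image_subset_ev[OF wf_P assms]] unfolding tnth_image[OF assms] .

lemma positions_srcI:
  assumes "Y \<subseteq> ev P"
  shows "positions (clist Q (srcI Q)) (h ` Y) = positions (clist P (srcI P)) Y"
  unfolding clist_srcI
proof (rule positions_map)
  fix x
  assume "x \<in> set (clist P (srcI P))"
  then have "x \<in> ev P"
    using clist_correct(2)[OF wf_P antichain_srcI[OF wf_P]] srcI_subset_ev[OF wf_P] by blast
  then show "h x \<in> h ` Y \<longleftrightarrow> x \<in> Y"
    using inj assms inj_on_image_mem_iff by metis
qed

end

lemma wf_pom_idp: "wf_pom (idp u)"
proof -
  have "{(i, j). i < j \<and> j < length u} \<subseteq> less_than"
    by auto
  then have "acyclic {(i, j). i < j \<and> j < length u}"
    using acyclic_subset wf_acyclic wf_less_than by blast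
  then show ?thesis
    unfolding wf_pom_def idp_def by (auto simp: irrefl_def trans_def)
qed

lemma clist_idp: "clist (idp u) {..<length u} = [0..<length u]"
  by (rule clist_eqI[OF wf_pom_acyclic_eord[OF wf_pom_idp]])
    (auto simp: idp_def sorted_wrt_iff_nth_less)

lemma t_word_idp: "t_word (idp u) = u"
  using clist_idp[of u] unfolding t_word_def cword_def by (simp add: idp_def map_nth)

lemma tnth_idp: "i < length u \<Longrightarrow> tnth (idp u) i = i"
  using clist_idp[of u] unfolding tnth_def by (simp add: idp_def)

lemma clist_idp_srcI: "clist (idp u) (srcI (idp u)) = [0..<length u]"
  using clist_idp[of u] by (simp add: idp_def)

lemma pom_iso_idp_discrete:
  assumes "wf_pom P" "prec P = {}" "srcI P = ev P" "tgtI P = ev P"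
  shows "pom_iso (idp (t_word P)) P"
proof -
  let ?cs = "clist P (tgtI P)"
  note cs = clist_correct[OF assms(1) antichain_tgtI[OF assms(1)]]
  have n: "length (t_word P) = length ?cs"
    by (rule length_t_word)
  have bij: "bij_betw ((!) ?cs) {..<length ?cs} (ev P)"
    using bij_betw_nth[OF cs(1)] cs(2) assms(4) by simp
  have eord: "(?cs ! i, ?cs ! j) \<in> eord P \<longleftrightarrow> i < j"
    if "i < length ?cs" "j < length ?cs" for i j
  proof
    assume ij: "(?cs ! i, ?cs ! j) \<in> eord P"
    then have "(?cs ! j, ?cs ! i) \<notin> eord P"
      using acyclic_asym[OF wf_pom_acyclic_eord[OF assms(1)]] by blast
    then show "i < j"
      using ij cs(3) that by (metis linorder_neqE_nat sorted_wrt_nth_less)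
  next
    assume "i < j"
    then show "(?cs ! i, ?cs ! j) \<in> eord P"
      using cs(3) that(2) by (simp add: sorted_wrt_iff_nth_less)
  qed
  show ?thesis
    unfolding pom_iso_def
    using bij eord n assms(2-4)
    by (intro exI[of _ "(!) ?cs"]) (auto simp: idp_def t_word_def cword_def bij_betw_def)
qed

section \<open>Gluing\<close>

lemma map_prod_image_Restr:
  assumes "A \<subseteq> S \<times> S" "\<And>x. x \<in> S \<Longrightarrow> f x \<in> Z \<longleftrightarrow> x \<in> X"
  shows "map_prod f f ` A \<inter> (- Z) \<times> (- Z) = map_prod f f ` (A \<inter> (S - X) \<times> (S - X))"
proof -
  have "map_prod f f ` A \<inter> (- Z) \<times> (- Z) = map_prod f f ` {p \<in> A. map_prod f f p \<in> (- Z) \<times> (- Z)}"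
    by auto
  also have "{p \<in> A. map_prod f f p \<in> (- Z) \<times> (- Z)} = A \<inter> (S - X) \<times> (S - X)"
    using assms by fastforce
  finally show ?thesis .
qed

lemma image_diff_eq:
  assumes "C \<subseteq> S" "\<And>x. x \<in> S \<Longrightarrow> f x \<in> Z \<longleftrightarrow> x \<in> X"
  shows "f ` C - Z = f ` (C - X)"
  using assms by auto

locale pom_gluing =
  fixes f g :: "nat \<Rightarrow> nat" and P Q R :: "'a pom"
  assumes wf_P: "wf_pom P" and wf_Q: "wf_pom Q" and wf_R: "wf_pom R"
    and inj_f: "inj_on f (ev P)" and inj_g: "inj_on g (ev Q)"
    and ev_R: "ev R = f ` ev P \<union> g ` ev Q"
    and overlap_tgtI: "f ` ev P \<inter> g ` ev Q = f ` tgtI P"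
    and overlap_srcI: "f ` ev P \<inter> g ` ev Q = g ` srcI Q"
    and overlap_eord: "\<forall>x\<in>tgtI P. \<forall>x'\<in>tgtI P. \<forall>y\<in>srcI Q. \<forall>y'\<in>srcI Q.
           f x = g y \<longrightarrow> f x' = g y' \<longrightarrow> ((x, x') \<in> eord P \<longleftrightarrow> (y, y') \<in> eord Q)"
    and lab_f: "\<forall>x\<in>ev P. lab R (f x) = lab P x"
    and lab_g: "\<forall>y\<in>ev Q. lab R (g y) = lab Q y"
    and prec_R: "prec R = map_prod f f ` prec P \<union> map_prod g g ` prec Q
                 \<union> (f ` (ev P - tgtI P)) \<times> (g ` (ev Q - srcI Q))"
    and eord_R: "eord R = map_prod f f ` eord P \<union> map_prod g g ` eord Q"
    and srcI_R: "srcI R = f ` srcI P"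
    and tgtI_R: "tgtI R = g ` tgtI Q"

lemma glueE:
  assumes "wf_pom P" "wf_pom Q" "wf_pom R" "glue P Q R"
  obtains f g where "pom_gluing f g P Q R"
proof -
  from assms(4) obtain f g where "inj_on f (ev P)" "inj_on g (ev Q)"
    "ev R = f ` ev P \<union> g ` ev Q" "f ` ev P \<inter> g ` ev Q = f ` tgtI P"
    "f ` ev P \<inter> g ` ev Q = g ` srcI Q"
    "\<forall>x\<in>tgtI P. \<forall>x'\<in>tgtI P. \<forall>y\<in>srcI Q. \<forall>y'\<in>srcI Q.
       f x = g y \<longrightarrow> f x' = g y' \<longrightarrow> ((x, x') \<in> eord P \<longleftrightarrow> (y, y') \<in> eord Q)"
    "\<forall>x\<in>ev P. lab R (f x) = lab P x" "\<forall>y\<in>ev Q. lab R (g y) = lab Q y"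
    "prec R = map_prod f f ` prec P \<union> map_prod g g ` prec Q
       \<union> (f ` (ev P - tgtI P)) \<times> (g ` (ev Q - srcI Q))"
    "eord R = map_prod f f ` eord P \<union> map_prod g g ` eord Q"
    "srcI R = f ` srcI P" "tgtI R = g ` tgtI Q"
    unfolding glue_def by (elim exE conjE) (rule that; assumption)
  with assms(1-3) have "pom_gluing f g P Q R"
    by unfold_locales
  then show thesis ..
qed

lemma (in pom_gluing) glue: "glue P Q R"
  unfolding glue_def
  by (intro exI[of _ f] exI[of _ g] conjI)
    (rule inj_f inj_g ev_R overlap_tgtI overlap_srcI overlap_eord lab_f lab_g prec_R eord_R srcI_R tgtI_R)+

context pom_gluing
begin

lemma interface_eq: "f ` tgtI P = g ` srcI Q"
  using overlap_tgtI overlap_srcI by simp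

lemma clist_f_image:
  assumes "antichain P A"
  shows "clist R (f ` A) = map f (clist P A)"
proof (rule clist_image[OF wf_P assms wf_pom_acyclic_eord[OF wf_R]])
  show "inj_on f A"
    using inj_f assms inj_on_subset unfolding antichain_def by blast
  show "(f x, f y) \<in> eord R" if "(x, y) \<in> eord P" for x y
    using that eord_R by auto
qed

lemma clist_g_image:
  assumes "antichain Q A"
  shows "clist R (g ` A) = map g (clist Q A)"
proof (rule clist_image[OF wf_Q assms wf_pom_acyclic_eord[OF wf_R]])
  show "inj_on g A"
    using inj_g assms inj_on_subset unfolding antichain_def by blast
  show "(g x, g y) \<in> eord R" if "(x, y) \<in> eord Q" for x y
    using that eord_R by auto
qed

lemma cword_f_image:
  assumes "antichain P A"
  shows "cword R (f ` A) = cword P A"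
proof -
  have "\<forall>x\<in>set (clist P A). lab R (f x) = lab P x"
    using clist_correct(2)[OF wf_P assms] assms lab_f unfolding antichain_def by blast
  then show ?thesis
    unfolding cword_def clist_f_image[OF assms] by simp
qed

lemma cword_g_image:
  assumes "antichain Q A"
  shows "cword R (g ` A) = cword Q A"
proof -
  have "\<forall>x\<in>set (clist Q A). lab R (g x) = lab Q x"
    using clist_correct(2)[OF wf_Q assms] assms lab_g unfolding antichain_def by blast
  then show ?thesis
    unfolding cword_def clist_g_image[OF assms] by simp
qed

lemma clist_srcI: "clist R (srcI R) = map f (clist P (srcI P))"
  unfolding srcI_R by (rule clist_f_image[OF antichain_srcI[OF wf_P]])

lemma clist_tgtI: "clist R (tgtI R) = map g (clist Q (tgtI Q))"
  unfolding tgtI_R by (rule clist_g_image[OF antichain_tgtI[OF wf_Q]])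

lemma clist_interface: "map f (clist P (tgtI P)) = map g (clist Q (srcI Q))"
  using clist_f_image[OF antichain_tgtI[OF wf_P]] clist_g_image[OF antichain_srcI[OF wf_Q]]
  unfolding interface_eq by simp

lemma s_word_eq: "s_word R = s_word P"
  unfolding s_word_def srcI_R by (rule cword_f_image[OF antichain_srcI[OF wf_P]])

lemma t_word_eq: "t_word R = t_word Q"
  unfolding t_word_def tgtI_R by (rule cword_g_image[OF antichain_tgtI[OF wf_Q]])

lemma t_word_eq_s_word: "t_word P = s_word Q"
  using cword_f_image[OF antichain_tgtI[OF wf_P]] cword_g_image[OF antichain_srcI[OF wf_Q]]
  unfolding t_word_def s_word_def interface_eq by simp

lemma length_interface: "length (clist P (tgtI P)) = length (clist Q (srcI Q))"
  using clist_interface by (metis length_map)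

lemma tnth_image:
  assumes "I \<subseteq> {..<length (t_word Q)}"
  shows "tnth R ` I = g ` tnth Q ` I"
proof -
  have "tnth R i = g (tnth Q i)" if "i \<in> I" for i
    using that assms unfolding tnth_def clist_tgtI length_t_word by auto
  then show ?thesis
    by (simp add: image_image)
qed

lemma f_mem_g_image_iff:
  assumes "Y \<subseteq> ev Q" "x \<in> ev P"
  shows "f x \<in> g ` Y \<longleftrightarrow> x \<in> tnth P ` positions (clist Q (srcI Q)) Y"
proof -
  let ?cp = "clist P (tgtI P)" and ?cq = "clist Q (srcI Q)"
  note cp = clist_correct[OF wf_P antichain_tgtI[OF wf_P]]
  note cq = clist_correct[OF wf_Q antichain_srcI[OF wf_Q]]
  have glued: "f (?cp ! i) = g (?cq ! i)" if "i < length ?cp" for i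
    using clist_interface that length_interface by (metis nth_map)
  have g_iff: "g y \<in> g ` Y \<longleftrightarrow> y \<in> Y" if "y \<in> ev Q" for y
    using inj_g assms(1) that inj_on_image_mem_iff by metis
  show ?thesis
  proof
    assume "f x \<in> g ` Y"
    then have "f x \<in> f ` tgtI P"
      using assms overlap_tgtI by blast
    then have "x \<in> tgtI P"
      using inj_f tgtI_subset_ev[OF wf_P] assms(2) inj_on_image_mem_iff by metis
    then obtain i where i: "i < length ?cp" "x = ?cp ! i"
      using cp(2) by (metis in_set_conv_nth)
    have "?cq ! i \<in> ev Q"
      using cq(2) srcI_subset_ev[OF wf_Q] i(1) length_interface nth_mem by (metis subsetD)
    then have "?cq ! i \<in> Y"
      using g_iff \<open>f x \<in> g ` Y\<close> glued[OF i(1)] i(2) by simp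
    then show "x \<in> tnth P ` positions ?cq Y"
      using i length_interface unfolding tnth_def positions_def by auto
  next
    assume "x \<in> tnth P ` positions ?cq Y"
    then obtain i where i: "i < length ?cp" "?cq ! i \<in> Y" "x = ?cp ! i"
      using length_interface unfolding tnth_def positions_def by auto
    then show "f x \<in> g ` Y"
      using glued by simp
  qed
qed

lemma positions_srcI:
  assumes "Y \<subseteq> ev Q"
  shows "positions (clist R (srcI R)) (g ` Y)
       = positions (clist P (srcI P)) (tnth P ` positions (clist Q (srcI Q)) Y)"
  unfolding clist_srcI
proof (rule positions_map)
  fix x
  assume "x \<in> set (clist P (srcI P))"
  then have "x \<in> ev P"
    using clist_correct(2)[OF wf_P antichain_srcI[OF wf_P]] srcI_subset_ev[OF wf_P] by blast
  then show "f x \<in> g ` Y \<longleftrightarrow> x \<in> tnth P ` positions (clist Q (srcI Q)) Y"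
    by (rule f_mem_g_image_iff[OF assms])
qed

text \<open>\<open>(P * Q) - Y = (P - X) * (Q - Y)\<close>, where \<open>X\<close> are the target events of \<open>P\<close>
  glued to events of \<open>Y\<close>.\<close>
lemma pminus:
  assumes Y: "Y \<subseteq> ev Q"
  defines "X \<equiv> tnth P ` positions (clist Q (srcI Q)) Y"
  shows "pom_gluing f g (pminus P X) (pminus Q Y) (pminus R (g ` Y))"
proof -
  let ?Z = "g ` Y"
  have fx: "f x \<in> ?Z \<longleftrightarrow> x \<in> X" if "x \<in> ev P" for x
    unfolding X_def by (rule f_mem_g_image_iff[OF Y that])
  have gy: "g y \<in> ?Z \<longleftrightarrow> y \<in> Y" if "y \<in> ev Q" for y
    using inj_g Y that inj_on_image_mem_iff by metis
  have X_tgtI: "X \<subseteq> tgtI P"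
    unfolding X_def
    by (rule tnth_image_subset[OF wf_P])
      (use positions_subset length_interface in \<open>auto simp: length_t_word\<close>)
  note subs = wf_pomD(2,6,10,12)[OF wf_P] wf_pomD(2,6,10,12)[OF wf_Q]
  have restr_R: "A \<inter> (ev R - ?Z) \<times> (ev R - ?Z) = A \<inter> (- ?Z) \<times> (- ?Z)" if "A \<subseteq> ev R \<times> ev R" for A
    using that by blast
  have ev_diff: "f ` (ev P - X) \<inter> g ` (ev Q - Y) = f ` ev P \<inter> g ` ev Q - ?Z"
    using image_diff_eq[OF order_refl fx] image_diff_eq[OF order_refl gy] by blast
  show ?thesis
  proof
    show "wf_pom (pminus P X)" "wf_pom (pminus Q Y)" "wf_pom (pminus R ?Z)"
      using wf_pom_pminus wf_P wf_Q wf_R by blast+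
    show "inj_on f (ev (pminus P X))" "inj_on g (ev (pminus Q Y))"
      using inj_f inj_g by (simp_all add: pminus_def inj_on_diff)
    show "ev (pminus R ?Z) = f ` ev (pminus P X) \<union> g ` ev (pminus Q Y)"
      using ev_R image_diff_eq[OF order_refl fx] image_diff_eq[OF order_refl gy]
      by (simp add: pminus_def Un_Diff)
    show "f ` ev (pminus P X) \<inter> g ` ev (pminus Q Y) = f ` tgtI (pminus P X)"
      using ev_diff overlap_tgtI image_diff_eq[OF subs(4) fx] by (simp add: pminus_def)
    show "f ` ev (pminus P X) \<inter> g ` ev (pminus Q Y) = g ` srcI (pminus Q Y)"
      using ev_diff overlap_srcI image_diff_eq[OF subs(7) gy] by (simp add: pminus_def)
    show "\<forall>x\<in>tgtI (pminus P X). \<forall>x'\<in>tgtI (pminus P X). \<forall>y\<in>srcI (pminus Q Y). \<forall>y'\<in>srcI (pminus Q Y).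
        f x = g y \<longrightarrow> f x' = g y' \<longrightarrow> ((x, x') \<in> eord (pminus P X) \<longleftrightarrow> (y, y') \<in> eord (pminus Q Y))"
      using overlap_eord subs(4,7) by (auto simp: pminus_def)
    show "\<forall>x\<in>ev (pminus P X). lab (pminus R ?Z) (f x) = lab (pminus P X) x"
      "\<forall>y\<in>ev (pminus Q Y). lab (pminus R ?Z) (g y) = lab (pminus Q Y) y"
      using lab_f lab_g by (simp_all add: pminus_def)
    have "prec (pminus R ?Z) = prec R \<inter> (- ?Z) \<times> (- ?Z)"
      using restr_R[OF wf_pomD(2)[OF wf_R]] by (simp add: pminus_def)
    also have "\<dots> = map_prod f f ` prec P \<inter> (- ?Z) \<times> (- ?Z) \<union> map_prod g g ` prec Q \<inter> (- ?Z) \<times> (- ?Z)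
        \<union> (f ` (ev P - tgtI P) - ?Z) \<times> (g ` (ev Q - srcI Q) - ?Z)"
      unfolding prec_R by blast
    also have "\<dots> = map_prod f f ` prec (pminus P X) \<union> map_prod g g ` prec (pminus Q Y)
        \<union> f ` (ev (pminus P X) - tgtI (pminus P X)) \<times> g ` (ev (pminus Q Y) - srcI (pminus Q Y))"
    proof -
      have "ev P - X - (tgtI P - X) = ev P - tgtI P" "ev P - tgtI P - X = ev P - tgtI P"
        using X_tgtI by blast+
      moreover have "ev Q - Y - (srcI Q - Y) = ev Q - srcI Q - Y"
        by blast
      ultimately show ?thesis
        using map_prod_image_Restr[OF subs(1) fx] map_prod_image_Restr[OF subs(5) gy]
          image_diff_eq[OF Diff_subset fx, of _ "tgtI P"] image_diff_eq[OF Diff_subset gy, of _ "srcI Q"]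
        by (simp add: pminus_def)
    qed
    finally show "prec (pminus R ?Z) = map_prod f f ` prec (pminus P X) \<union> map_prod g g ` prec (pminus Q Y)
        \<union> f ` (ev (pminus P X) - tgtI (pminus P X)) \<times> g ` (ev (pminus Q Y) - srcI (pminus Q Y))" .
    have "eord (pminus R ?Z) = eord R \<inter> (- ?Z) \<times> (- ?Z)"
      using restr_R[OF wf_pomD(6)[OF wf_R]] by (simp add: pminus_def)
    also have "\<dots> = map_prod f f ` eord P \<inter> (- ?Z) \<times> (- ?Z) \<union> map_prod g g ` eord Q \<inter> (- ?Z) \<times> (- ?Z)"
      unfolding eord_R by blast
    also have "\<dots> = map_prod f f ` eord (pminus P X) \<union> map_prod g g ` eord (pminus Q Y)"
      using map_prod_image_Restr[OF subs(2) fx] map_prod_image_Restr[OF subs(6) gy]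
      by (simp add: pminus_def)
    finally show "eord (pminus R ?Z) = map_prod f f ` eord (pminus P X) \<union> map_prod g g ` eord (pminus Q Y)" .
    show "srcI (pminus R ?Z) = f ` srcI (pminus P X)"
      using srcI_R image_diff_eq[OF subs(3) fx] by (simp add: pminus_def)
    show "tgtI (pminus R ?Z) = g ` tgtI (pminus Q Y)"
      using tgtI_R image_diff_eq[OF subs(8) gy] by (simp add: pminus_def)
  qed
qed

end

section \<open>Profiles\<close>

type_synonym ('a, 'm) profile = "'a list \<times> 'a list \<times> (nat set \<Rightarrow> 'm)"

definition profile :: "('a pom \<Rightarrow> 'm) \<Rightarrow> 'a pom \<Rightarrow> ('a, 'm) profile" where
  "profile Fm P = (s_word P, t_word P,
     \<lambda>I. if I \<subseteq> {..<length (t_word P)} then Fm (pminus P (tnth P ` I)) else undefined)"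

fun profile_act :: "('o, 'm) cat \<Rightarrow> ('a pom \<Rightarrow> 'm) \<Rightarrow> ('a, 'm) profile \<Rightarrow> 'a pom \<Rightarrow> ('a, 'm) profile" where
  "profile_act D Fm (s, t, F) \<alpha> = (s, t_word \<alpha>,
     \<lambda>I. if I \<subseteq> {..<length (t_word \<alpha>)}
         then dcomp D (F (positions (clist \<alpha> (srcI \<alpha>)) (tnth \<alpha> ` I))) (Fm (pminus \<alpha> (tnth \<alpha> ` I)))
         else undefined)"

text \<open>Extensionality (\<open>undefined\<close> off the subsets of target positions) makes the set
  of profiles finite.\<close>
definition profiles :: "('o, 'm) cat \<Rightarrow> ('a list \<Rightarrow> 'o) \<Rightarrow> nat \<Rightarrow> ('a, 'm) profile set" where
  "profiles D Fo k = {(s, t, F). length s \<le> k \<and> length t \<le> k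
     \<and> (\<forall>I \<subseteq> {..<length t}. F I \<in> dMor D \<and> dcod D (F I) = Fo (del_positions I t))
     \<and> (\<forall>I. \<not> I \<subseteq> {..<length t} \<longrightarrow> F I = undefined)}"

lemma finite_profiles:
  assumes "finite (UNIV :: 'a set)" "finite (dMor D)"
  shows "finite (profiles D Fo k :: ('a, 'm) profile set)"
proof -
  let ?W = "{xs :: 'a list. set xs \<subseteq> UNIV \<and> length xs \<le> k}"
  have "profiles D Fo k \<subseteq> ?W \<times> (SIGMA t:?W. Pow {..<length t} \<rightarrow>\<^sub>E dMor D)"
    unfolding profiles_def by (auto simp: PiE_def Pi_def extensional_def)
  moreover have "finite (?W \<times> (SIGMA t:?W. Pow {..<length t} \<rightarrow>\<^sub>E dMor D))"
    using finite_lists_length_le[OF assms(1)] assms(2) by (intro finite_SigmaI finite_PiE) auto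
  ultimately show ?thesis
    using finite_subset by blast
qed

text \<open>Position \<open>j\<close> of the target of \<open>P - T\<^sub>P[I]\<close> is position
  \<open>positions_outside I n ! j\<close> of the target of \<open>P\<close>.\<close>
fun profile_remove :: "nat set \<Rightarrow> ('a, 'm) profile \<Rightarrow> ('a, 'm) profile" where
  "profile_remove I (s, t, F) = (s, del_positions I t,
     \<lambda>J. if J \<subseteq> {..<length (del_positions I t)}
         then F (I \<union> (!) (positions_outside I (length t)) ` J) else undefined)"

lemma profile_pminus:
  assumes wf: "wf_pom P" and src: "srcI P = {}" and I: "I \<subseteq> {..<length (t_word P)}"
  shows "profile Fm (pminus P (tnth P ` I)) = profile_remove I (profile Fm P)"
proof -
  let ?X = "tnth P ` I" and ?ps = "positions_outside I (length (t_word P))"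
  have "s_word (pminus P ?X) = s_word P"
    unfolding s_word_def cword_def by (simp add: pminus_def src)
  moreover have "pminus (pminus P ?X) (tnth (pminus P ?X) ` J) = pminus P (tnth P ` (I \<union> (!) ?ps ` J))"
    and "I \<union> (!) ?ps ` J \<subseteq> {..<length (t_word P)}"
    if J: "J \<subseteq> {..<length (del_positions I (t_word P))}" for J
  proof -
    have "tnth (pminus P ?X) j = tnth P (?ps ! j)" if "j \<in> J" for j
      using tnth_pminus[OF wf I] J that by auto
    then have "tnth (pminus P ?X) ` J = tnth P ` (!) ?ps ` J"
      by (simp add: image_image)
    then show "pminus (pminus P ?X) (tnth (pminus P ?X) ` J) = pminus P (tnth P ` (I \<union> (!) ?ps ` J))"
      by (simp add: pminus_pminus image_Un)
    show "I \<union> (!) ?ps ` J \<subseteq> {..<length (t_word P)}"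
      using I J positions_outside_nth_less by (fastforce simp: length_del_positions)
  qed
  ultimately show ?thesis
    unfolding profile_def profile_remove.simps t_word_pminus[OF wf I] by auto
qed

locale pom_functor =
  fixes D :: "('o, 'm) cat" and Fo :: "'a list \<Rightarrow> 'o" and Fm :: "'a pom \<Rightarrow> 'm"
  assumes category_D: "category D" and functor_F: "iiPoms_functor D Fo Fm"
begin

lemma Fm_typed:
  "wf_pom P \<Longrightarrow> Fm P \<in> dMor D \<and> ddom D (Fm P) = Fo (s_word P) \<and> dcod D (Fm P) = Fo (t_word P)"
  using functor_F unfolding iiPoms_functor_def by blast

lemma Fm_iso: "wf_pom P \<Longrightarrow> wf_pom Q \<Longrightarrow> pom_iso P Q \<Longrightarrow> Fm P = Fm Q"
  using functor_F unfolding iiPoms_functor_def by blast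

lemma Fm_idp: "Fm (idp U) = did D (Fo U)"
  using functor_F unfolding iiPoms_functor_def by blast

lemma Fm_glue: "pom_gluing f g P Q R \<Longrightarrow> Fm R = dcomp D (Fm P) (Fm Q)"
  using functor_F pom_gluing.glue pom_gluing.wf_P pom_gluing.wf_Q pom_gluing.wf_R
  unfolding iiPoms_functor_def by metis

lemma comp_typed:
  "a \<in> dMor D \<Longrightarrow> b \<in> dMor D \<Longrightarrow> dcod D a = ddom D b \<Longrightarrow>
   dcomp D a b \<in> dMor D \<and> dcod D (dcomp D a b) = dcod D b"
  using category_D unfolding category_def by blast

lemma comp_id: "a \<in> dMor D \<Longrightarrow> dcomp D a (did D (dcod D a)) = a"
  using category_D unfolding category_def by blast

lemma comp_assoc:
  "a \<in> dMor D \<Longrightarrow> b \<in> dMor D \<Longrightarrow> c \<in> dMor D \<Longrightarrow> dcod D a = ddom D b \<Longrightarrow> dcod D b = ddom D c \<Longrightarrow>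
   dcomp D (dcomp D a b) c = dcomp D a (dcomp D b c)"
  using category_D unfolding category_def by blast

lemma Fm_pminus_typed:
  assumes "wf_pom P" "I \<subseteq> {..<length (t_word P)}"
  shows "Fm (pminus P (tnth P ` I)) \<in> dMor D \<and> dcod D (Fm (pminus P (tnth P ` I))) = Fo (del_positions I (t_word P))"
  using Fm_typed[OF wf_pom_pminus[OF assms(1)]] t_word_pminus[OF assms] by simp

lemma profile_in_profiles:
  assumes "iiP k P"
  shows "profile Fm P \<in> profiles D Fo k"
  using length_s_word_le[OF assms] length_t_word_le[OF assms] assms Fm_pminus_typed
  unfolding profile_def profiles_def iiP_def by auto

lemma profile_iso:
  assumes "wf_pom P" "wf_pom Q" "pom_iso P Q"
  shows "profile Fm P = profile Fm Q"
proof -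
  obtain h where h: "pom_isomorphism h P Q"
    using pom_isoE[OF assms] .
  have "Fm (pminus P (tnth P ` I)) = Fm (pminus Q (tnth Q ` I))" if "I \<subseteq> {..<length (t_word P)}" for I
    using pom_isomorphism.pminus_tnth[OF h that] Fm_iso pom_isomorphism.pom_iso
      pom_isomorphism.wf_P pom_isomorphism.wf_Q by metis
  then show ?thesis
    unfolding profile_def pom_isomorphism.s_word_eq[OF h] pom_isomorphism.t_word_eq[OF h] by auto
qed

lemma Fm_pminus_glue:
  assumes gl: "pom_gluing f g P Q R" and I: "I \<subseteq> {..<length (t_word Q)}"
  shows "Fm (pminus R (tnth R ` I))
       = dcomp D (Fm (pminus P (tnth P ` positions (clist Q (srcI Q)) (tnth Q ` I))))
                 (Fm (pminus Q (tnth Q ` I)))"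
proof -
  from pom_gluing.pminus[OF gl tnth_image_subset_ev[OF pom_gluing.wf_Q[OF gl] I]] show ?thesis
    unfolding pom_gluing.tnth_image[OF gl I] by (rule Fm_glue)
qed

lemma profiles_composable:
  assumes m: "(s, t, F) \<in> profiles D Fo k" and "wf_pom \<alpha>" "s_word \<alpha> = t"
  shows "F (positions (clist \<alpha> (srcI \<alpha>)) Y) \<in> dMor D
       \<and> dcod D (F (positions (clist \<alpha> (srcI \<alpha>)) Y)) = ddom D (Fm (pminus \<alpha> Y))"
proof -
  have "positions (clist \<alpha> (srcI \<alpha>)) Y \<subseteq> {..<length t}"
    using positions_subset assms(3) unfolding s_word_def cword_def by fastforce
  then show ?thesis
    using m Fm_typed[OF wf_pom_pminus[OF assms(2)]] s_word_pminus[OF assms(2)] assms(3)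
    unfolding profiles_def by auto
qed

lemma profile_act_in_profiles:
  assumes m: "m \<in> profiles D Fo k" and \<alpha>: "iiP k \<alpha>" "s_word \<alpha> = fst (snd m)"
  shows "profile_act D Fm m \<alpha> \<in> profiles D Fo k"
proof -
  obtain s t F where m_eq: "m = (s, t, F)"
    by (cases m) auto
  have wf: "wf_pom \<alpha>"
    using \<alpha>(1) unfolding iiP_def by blast
  have "dcomp D (F (positions (clist \<alpha> (srcI \<alpha>)) (tnth \<alpha> ` I))) (Fm (pminus \<alpha> (tnth \<alpha> ` I))) \<in> dMor D
     \<and> dcod D (dcomp D (F (positions (clist \<alpha> (srcI \<alpha>)) (tnth \<alpha> ` I))) (Fm (pminus \<alpha> (tnth \<alpha> ` I))))
       = Fo (del_positions I (t_word \<alpha>))"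
    if I: "I \<subseteq> {..<length (t_word \<alpha>)}" for I
    using profiles_composable[OF m[unfolded m_eq] wf] \<alpha>(2) m_eq Fm_pminus_typed[OF wf I] comp_typed
    by simp
  then show ?thesis
    using m length_t_word_le[OF \<alpha>(1)] unfolding m_eq profiles_def by auto
qed

lemma profile_act_idp:
  assumes m: "m \<in> profiles D Fo k"
  shows "profile_act D Fm m (idp (fst (snd m))) = m"
proof -
  obtain s t F where m_eq: "m = (s, t, F)"
    by (cases m) auto
  have F: "\<And>I. I \<subseteq> {..<length t} \<Longrightarrow> F I \<in> dMor D \<and> dcod D (F I) = Fo (del_positions I t)"
    "\<And>I. \<not> I \<subseteq> {..<length t} \<Longrightarrow> F I = undefined"
    using m unfolding m_eq profiles_def by auto
  have "dcomp D (F (positions (clist (idp t) (srcI (idp t))) (tnth (idp t) ` I)))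
      (Fm (pminus (idp t) (tnth (idp t) ` I))) = F I"
    if I: "I \<subseteq> {..<length t}" for I
  proof -
    have "tnth (idp t) ` I = id ` I"
      using tnth_idp I by (intro image_cong) auto
    then have tnth: "tnth (idp t) ` I = I"
      by simp
    have pos: "positions (clist (idp t) (srcI (idp t))) I = I"
      using I unfolding clist_idp_srcI positions_def by auto
    let ?Q = "pminus (idp t) I"
    have "pom_iso (idp (t_word ?Q)) ?Q"
      by (rule pom_iso_idp_discrete[OF wf_pom_pminus[OF wf_pom_idp]]) (simp_all add: pminus_def idp_def)
    then have "Fm ?Q = did D (Fo (t_word ?Q))"
      using Fm_iso[OF wf_pom_idp wf_pom_pminus[OF wf_pom_idp]] Fm_idp by metis
    also have "t_word ?Q = del_positions I t"
      using t_word_pminus[OF wf_pom_idp, of I t] I tnth by (simp add: t_word_idp)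
    finally have "Fm ?Q = did D (dcod D (F I))"
      using F(1)[OF I] by simp
    then show ?thesis
      unfolding tnth pos using comp_id F(1)[OF I] by metis
  qed
  then show ?thesis
    unfolding m_eq using F(2) by (auto simp: t_word_idp)
qed

lemma profile_act_iso:
  assumes \<alpha>: "iiP k \<alpha>" and \<beta>: "iiP k \<beta>" and iso: "pom_iso \<alpha> \<beta>"
  shows "profile_act D Fm m \<alpha> = profile_act D Fm m \<beta>"
proof -
  have wf: "wf_pom \<alpha>" "wf_pom \<beta>"
    using \<alpha> \<beta> unfolding iiP_def by blast+
  obtain h where h: "pom_isomorphism h \<alpha> \<beta>"
    using pom_isoE[OF wf iso] .
  obtain s t F where m_eq: "m = (s, t, F)"
    by (cases m) auto
  have "positions (clist \<beta> (srcI \<beta>)) (tnth \<beta> ` I) = positions (clist \<alpha> (srcI \<alpha>)) (tnth \<alpha> ` I)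
      \<and> Fm (pminus \<alpha> (tnth \<alpha> ` I)) = Fm (pminus \<beta> (tnth \<beta> ` I))"
    if I: "I \<subseteq> {..<length (t_word \<alpha>)}" for I
  proof
    have "tnth \<alpha> ` I \<subseteq> ev \<alpha>"
      by (rule tnth_image_subset_ev[OF wf(1) I])
    then show "positions (clist \<beta> (srcI \<beta>)) (tnth \<beta> ` I) = positions (clist \<alpha> (srcI \<alpha>)) (tnth \<alpha> ` I)"
      unfolding pom_isomorphism.tnth_image[OF h I] by (rule pom_isomorphism.positions_srcI[OF h])
    show "Fm (pminus \<alpha> (tnth \<alpha> ` I)) = Fm (pminus \<beta> (tnth \<beta> ` I))"
      using pom_isomorphism.pminus_tnth[OF h I] Fm_iso pom_isomorphism.pom_iso
        pom_isomorphism.wf_P pom_isomorphism.wf_Q by metis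
  qed
  then show ?thesis
    unfolding m_eq profile_act.simps pom_isomorphism.t_word_eq[OF h] by auto
qed

lemma profile_glue:
  assumes P: "iiP k P" and \<alpha>: "iiP k \<alpha>" and R: "iiP k R" and gl: "glue P \<alpha> R"
  shows "profile Fm R = profile_act D Fm (profile Fm P) \<alpha>"
proof -
  have wf: "wf_pom P" "wf_pom \<alpha>" "wf_pom R"
    using P \<alpha> R unfolding iiP_def by blast+
  obtain f g where fg: "pom_gluing f g P \<alpha> R"
    using glueE[OF wf gl] .
  have "positions (clist \<alpha> (srcI \<alpha>)) Y \<subseteq> {..<length (t_word P)}" for Y
    using positions_subset pom_gluing.length_interface[OF fg] by (simp add: length_t_word)
  then show ?thesis
    unfolding profile_def profile_act.simps pom_gluing.s_word_eq[OF fg] pom_gluing.t_word_eq[OF fg]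
    using Fm_pminus_glue[OF fg] by auto
qed

lemma profile_act_glue:
  assumes m: "m \<in> profiles D Fo k" and \<alpha>: "iiP k \<alpha>" and \<beta>: "iiP k \<beta>" and \<gamma>: "iiP k \<gamma>"
    and words: "s_word \<alpha> = fst (snd m)" "s_word \<beta> = t_word \<alpha>" and gl: "glue \<alpha> \<beta> \<gamma>"
  shows "profile_act D Fm (profile_act D Fm m \<alpha>) \<beta> = profile_act D Fm m \<gamma>"
proof -
  obtain s t F where m_eq: "m = (s, t, F)"
    by (cases m) auto
  have wf: "wf_pom \<alpha>" "wf_pom \<beta>" "wf_pom \<gamma>"
    using \<alpha> \<beta> \<gamma> unfolding iiP_def by blast+
  obtain f g where fg: "pom_gluing f g \<alpha> \<beta> \<gamma>"
    using glueE[OF wf gl] .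
  have "dcomp D (dcomp D (F (positions (clist \<alpha> (srcI \<alpha>)) (tnth \<alpha> ` J))) (Fm (pminus \<alpha> (tnth \<alpha> ` J))))
                 (Fm (pminus \<beta> (tnth \<beta> ` I)))
      = dcomp D (F (positions (clist \<gamma> (srcI \<gamma>)) (tnth \<gamma> ` I))) (Fm (pminus \<gamma> (tnth \<gamma> ` I)))"
    if I: "I \<subseteq> {..<length (t_word \<beta>)}" and J: "J = positions (clist \<beta> (srcI \<beta>)) (tnth \<beta> ` I)" for I J
  proof -
    let ?Y = "tnth \<beta> ` I" and ?X = "tnth \<alpha> ` J"
    have Y: "?Y \<subseteq> ev \<beta>"
      by (rule tnth_image_subset_ev[OF wf(2) I])
    have pos: "positions (clist \<gamma> (srcI \<gamma>)) (tnth \<gamma> ` I) = positions (clist \<alpha> (srcI \<alpha>)) ?X"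
      unfolding pom_gluing.tnth_image[OF fg I] J by (rule pom_gluing.positions_srcI[OF fg Y])
    have gl_minus: "pom_gluing f g (pminus \<alpha> ?X) (pminus \<beta> ?Y) (pminus \<gamma> (g ` ?Y))"
      unfolding J by (rule pom_gluing.pminus[OF fg Y])
    have "dcod D (Fm (pminus \<alpha> ?X)) = ddom D (Fm (pminus \<beta> ?Y))"
      using Fm_typed pom_gluing.t_word_eq_s_word[OF gl_minus]
        pom_gluing.wf_P[OF gl_minus] pom_gluing.wf_Q[OF gl_minus] by metis
    then show ?thesis
      unfolding pos Fm_pminus_glue[OF fg I, folded J]
      using profiles_composable[OF m[unfolded m_eq] wf(1)] words(1) m_eq
        Fm_typed[OF wf_pom_pminus[OF wf(1)]] Fm_typed[OF wf_pom_pminus[OF wf(2)]]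
      by (intro comp_assoc) auto
  qed
  moreover have "positions (clist \<beta> (srcI \<beta>)) Y \<subseteq> {..<length (t_word \<alpha>)}" for Y
    using positions_subset pom_gluing.length_interface[OF fg] by (simp add: length_t_word)
  ultimately show ?thesis
    unfolding m_eq profile_act.simps pom_gluing.t_word_eq[OF fg] by auto
qed


lemma iiPoms_module_profiles:
  "iiPoms_module k (profiles D Fo k) fst (\<lambda>m. fst (snd m)) (profile_act D Fm)"
  unfolding iiPoms_module_def
proof (intro conjI ballI allI impI)
  fix m :: "('a, 'm) profile"
  assume "m \<in> profiles D Fo k"
  then show "length (fst m) \<le> k" "length (fst (snd m)) \<le> k"
    unfolding profiles_def by auto
next
  fix m :: "('a, 'm) profile" and \<alpha>
  assume "m \<in> profiles D Fo k" "iiP k \<alpha> \<and> s_word \<alpha> = fst (snd m)"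
  then show "profile_act D Fm m \<alpha> \<in> profiles D Fo k"
    using profile_act_in_profiles by blast
  show "fst (profile_act D Fm m \<alpha>) = fst m" "fst (snd (profile_act D Fm m \<alpha>)) = t_word \<alpha>"
    by (cases m; simp)+
next
  fix m :: "('a, 'm) profile"
  assume "m \<in> profiles D Fo k"
  then show "profile_act D Fm m (idp (fst (snd m))) = m"
    by (rule profile_act_idp)
next
  fix m :: "('a, 'm) profile" and \<alpha> \<beta>
  assume "iiP k \<alpha> \<and> iiP k \<beta> \<and> s_word \<alpha> = fst (snd m) \<and> pom_iso \<alpha> \<beta>"
  then show "profile_act D Fm m \<alpha> = profile_act D Fm m \<beta>"
    using profile_act_iso by blast
next
  fix m :: "('a, 'm) profile" and \<alpha> \<beta> \<gamma>
  assume "m \<in> profiles D Fo k"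
    and "iiP k \<alpha> \<and> iiP k \<beta> \<and> iiP k \<gamma> \<and> s_word \<alpha> = fst (snd m) \<and> s_word \<beta> = t_word \<alpha> \<and> glue \<alpha> \<beta> \<gamma>"
  then show "profile_act D Fm (profile_act D Fm m \<alpha>) \<beta> = profile_act D Fm m \<gamma>"
    using profile_act_glue by blast
qed

lemma iiPoms_module_hom_profile:
  "iiPoms_module_hom k (profiles D Fo k) fst (\<lambda>m. fst (snd m)) (profile_act D Fm) (profile Fm)"
  unfolding iiPoms_module_hom_def
proof (intro conjI allI impI)
  fix P :: "'a pom"
  assume "iiP k P"
  then show "profile Fm P \<in> profiles D Fo k"
    by (rule profile_in_profiles)
  show "fst (profile Fm P) = s_word P" "fst (snd (profile Fm P)) = t_word P"
    by (simp_all add: profile_def)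
next
  fix P Q :: "'a pom"
  assume "iiP k P \<and> iiP k Q \<and> pom_iso P Q"
  then show "profile Fm P = profile Fm Q"
    using profile_iso unfolding iiP_def by blast
next
  fix P \<alpha> R :: "'a pom"
  assume "iiP k P \<and> iiP k \<alpha> \<and> iiP k R \<and> s_word \<alpha> = t_word P \<and> glue P \<alpha> R"
  then show "profile Fm R = profile_act D Fm (profile Fm P) \<alpha>"
    using profile_glue by blast
qed

end

section \<open>Coherent presentations\<close>

definition coherent_presentation ::
  "nat \<Rightarrow> 'a pom set \<Rightarrow> 'b set \<Rightarrow> ('b \<Rightarrow> 'a list) \<Rightarrow> ('b \<Rightarrow> 'a list) \<Rightarrow> ('b \<Rightarrow> 'a pom \<Rightarrow> 'b)
     \<Rightarrow> 'b set \<Rightarrow> ('a pom \<Rightarrow> 'b) \<Rightarrow> bool" where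
  "coherent_presentation k L M msrc mtgt act J \<phi> \<longleftrightarrow>
     iiPoms_module k M msrc mtgt act \<and> J \<subseteq> M
   \<and> iiPoms_module_hom k M msrc mtgt act \<phi>
   \<and> L = {P. iiP k P \<and> \<phi> P \<in> J}
   \<and> (\<forall>U P Q. iiP k P \<and> iiP k Q \<and> s_word P = [] \<and> s_word Q = [] \<and> t_word P = U \<and> t_word Q = U
         \<and> \<phi> P = \<phi> Q \<longrightarrow>
         (\<forall>I \<subseteq> {..<length U}. \<phi> (pminus P (tnth P ` I)) = \<phi> (pminus Q (tnth Q ` I))))"

lemma (in pom_functor) coherent_presentation_profiles:
  assumes "\<forall>P\<in>L. iiP k P \<and> srcI P = {}" "L = {P. wf_pom P \<and> Fm P \<in> K}"
  shows "coherent_presentation k L (profiles D Fo k) fst (\<lambda>m. fst (snd m)) (profile_act D Fm)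
           {m \<in> profiles D Fo k. fst m = [] \<and> snd (snd m) {} \<in> K} (profile Fm)"
proof -
  have accept: "P \<in> L \<longleftrightarrow> fst (profile Fm P) = [] \<and> snd (snd (profile Fm P)) {} \<in> K"
    if "iiP k P" for P
  proof -
    have wf: "wf_pom P"
      using that unfolding iiP_def by blast
    have "fst (profile Fm P) = s_word P" "snd (snd (profile Fm P)) {} = Fm P"
      using pminus_empty[OF wf] by (simp_all add: profile_def)
    then show ?thesis
      using assms s_word_eq_Nil_iff[OF wf] wf by auto
  qed
  have coherent: "profile Fm (pminus P (tnth P ` I)) = profile Fm (pminus Q (tnth Q ` I))"
    if "iiP k P" "iiP k Q" "s_word P = []" "s_word Q = []" "t_word P = U" "t_word Q = U"
      "profile Fm P = profile Fm Q" "I \<subseteq> {..<length U}" for U P Q I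
  proof -
    have "wf_pom P" "wf_pom Q"
      using that(1,2) unfolding iiP_def by blast+
    then show ?thesis
      using profile_pminus s_word_eq_Nil_iff that(3-8) by metis
  qed
  show ?thesis
    unfolding coherent_presentation_def
  proof (intro conjI)
    show "L = {P. iiP k P \<and> profile Fm P \<in> {m \<in> profiles D Fo k. fst m = [] \<and> snd (snd m) {} \<in> K}}"
      using accept profile_in_profiles assms(1) by blast
  qed (use iiPoms_module_profiles iiPoms_module_hom_profile coherent in auto)
qed

lemma iiPoms_module_image:
  assumes module: "iiPoms_module k M msrc mtgt act" and inj: "inj_on h M"
  defines "h' \<equiv> the_inv_into M h"
  shows "iiPoms_module k (h ` M) (msrc \<circ> h') (mtgt \<circ> h') (\<lambda>n \<alpha>. h (act (h' n) \<alpha>))"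
proof -
  have h'_h [simp]: "h' (h m) = m" if "m \<in> M" for m
    unfolding h'_def using the_inv_into_f_f[OF inj that] .
  have act: "act m \<alpha> \<in> M \<and> msrc (act m \<alpha>) = msrc m \<and> mtgt (act m \<alpha>) = t_word \<alpha>"
    if "m \<in> M" "iiP k \<alpha>" "s_word \<alpha> = mtgt m" for m \<alpha>
    using module that unfolding iiPoms_module_def by blast
  show ?thesis
    using module act unfolding iiPoms_module_def by auto
qed

lemma iiPoms_module_hom_image:
  assumes hom: "iiPoms_module_hom k M msrc mtgt act \<phi>" and inj: "inj_on h M"
  defines "h' \<equiv> the_inv_into M h"
  shows "iiPoms_module_hom k (h ` M) (msrc \<circ> h') (mtgt \<circ> h') (\<lambda>n \<alpha>. h (act (h' n) \<alpha>)) (h \<circ> \<phi>)"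
proof -
  have h'_h [simp]: "h' (h m) = m" if "m \<in> M" for m
    unfolding h'_def using the_inv_into_f_f[OF inj that] .
  have "\<phi> P \<in> M" if "iiP k P" for P
    using hom that unfolding iiPoms_module_hom_def by blast
  then show ?thesis
    using hom unfolding iiPoms_module_hom_def by auto
qed

lemma coherent_presentation_image:
  assumes pres: "coherent_presentation k L M msrc mtgt act J \<phi>" and inj: "inj_on h M"
  defines "h' \<equiv> the_inv_into M h"
  shows "coherent_presentation k L (h ` M) (msrc \<circ> h') (mtgt \<circ> h') (\<lambda>n \<alpha>. h (act (h' n) \<alpha>)) (h ` J) (h \<circ> \<phi>)"
proof -
  have module: "iiPoms_module k M msrc mtgt act" and JM: "J \<subseteq> M"
    and hom: "iiPoms_module_hom k M msrc mtgt act \<phi>" and L_eq: "L = {P. iiP k P \<and> \<phi> P \<in> J}"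
    and coh: "\<And>U P Q I. iiP k P \<and> iiP k Q \<and> s_word P = [] \<and> s_word Q = [] \<and> t_word P = U \<and> t_word Q = U
         \<and> \<phi> P = \<phi> Q \<Longrightarrow> I \<subseteq> {..<length U} \<Longrightarrow> \<phi> (pminus P (tnth P ` I)) = \<phi> (pminus Q (tnth Q ` I))"
    using pres unfolding coherent_presentation_def by blast+
  have \<phi>M: "\<phi> P \<in> M" if "iiP k P" for P
    using hom that unfolding iiPoms_module_hom_def by blast
  have h_eq: "h (\<phi> P) = h (\<phi> Q) \<longleftrightarrow> \<phi> P = \<phi> Q" if "iiP k P" "iiP k Q" for P Q
    using inj \<phi>M[OF that(1)] \<phi>M[OF that(2)] inj_on_eq_iff by metis
  have h_mem: "h (\<phi> P) \<in> h ` J \<longleftrightarrow> \<phi> P \<in> J" if "iiP k P" for P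
    using inj JM \<phi>M[OF that] inj_on_image_mem_iff by metis
  show ?thesis
    unfolding coherent_presentation_def
  proof (intro conjI)
    show "iiPoms_module k (h ` M) (msrc \<circ> h') (mtgt \<circ> h') (\<lambda>n \<alpha>. h (act (h' n) \<alpha>))"
      unfolding h'_def by (rule iiPoms_module_image[OF module inj])
    show "h ` J \<subseteq> h ` M"
      using JM by (rule image_mono)
    show "iiPoms_module_hom k (h ` M) (msrc \<circ> h') (mtgt \<circ> h') (\<lambda>n \<alpha>. h (act (h' n) \<alpha>)) (h \<circ> \<phi>)"
      unfolding h'_def by (rule iiPoms_module_hom_image[OF hom inj])
    show "L = {P. iiP k P \<and> (h \<circ> \<phi>) P \<in> h ` J}"
      unfolding L_eq using h_mem by auto
    show "\<forall>U P Q. iiP k P \<and> iiP k Q \<and> s_word P = [] \<and> s_word Q = [] \<and> t_word P = U \<and> t_word Q = U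
        \<and> (h \<circ> \<phi>) P = (h \<circ> \<phi>) Q \<longrightarrow>
        (\<forall>I \<subseteq> {..<length U}. (h \<circ> \<phi>) (pminus P (tnth P ` I)) = (h \<circ> \<phi>) (pminus Q (tnth Q ` I)))"
    proof (intro allI impI)
      fix U P Q I
      assume PQ: "iiP k P \<and> iiP k Q \<and> s_word P = [] \<and> s_word Q = [] \<and> t_word P = U \<and> t_word Q = U
          \<and> (h \<circ> \<phi>) P = (h \<circ> \<phi>) Q" and I: "I \<subseteq> {..<length U}"
      then have "\<phi> P = \<phi> Q"
        using h_eq by (metis comp_apply)
      with PQ I show "(h \<circ> \<phi>) (pminus P (tnth P ` I)) = (h \<circ> \<phi>) (pminus Q (tnth Q ` I))"
        using coh[of P Q U I] by simp
    qed
  qed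
qed

lemma finite_coherent_presentation_nat:
  assumes "finite M" "coherent_presentation k L M msrc mtgt act J \<phi>"
  shows "\<exists>(M' :: nat set) msrc' mtgt' act' J' \<phi>'.
           finite M' \<and> coherent_presentation k L M' msrc' mtgt' act' J' \<phi>'"
proof -
  obtain h :: "_ \<Rightarrow> nat" where "inj_on h M"
    using assms(1) finite_imp_inj_to_nat_seg by blast
  then show ?thesis
    using coherent_presentation_image[OF assms(2)] assms(1) by blast
qed

theorem mainTheorem6:
  fixes k :: nat
    and L :: "'a pom set"
    and D :: "('o, 'm) cat"
    and K :: "'m set"
    and Fo :: "'a list \<Rightarrow> 'o"
    and Fm :: "'a pom \<Rightarrow> 'm"
  assumes "finite (UNIV :: 'a set)"
    and "\<forall>P\<in>L. iiP k P \<and> srcI P = {}"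
    and "finite_category D"
    and "K \<subseteq> dMor D"
    and "iiPoms_functor D Fo Fm"
    and "L = {P. wf_pom P \<and> Fm P \<in> K}"
  shows "\<exists>(M :: nat set) msrc mtgt act J \<phi>.
           finite M \<and> iiPoms_module k M msrc mtgt act \<and> J \<subseteq> M
         \<and> iiPoms_module_hom k M msrc mtgt act \<phi>
         \<and> L = {P. iiP k P \<and> \<phi> P \<in> J}
         \<and> (\<forall>U P Q. iiP k P \<and> iiP k Q \<and> s_word P = [] \<and> s_word Q = [] \<and> t_word P = U \<and> t_word Q = U
               \<and> \<phi> P = \<phi> Q \<longrightarrow>
               (\<forall>I \<subseteq> {..<length U}. \<phi> (pminus P (tnth P ` I)) = \<phi> (pminus Q (tnth Q ` I))))"
proof -
  interpret pom_functor D Fo Fm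
    using assms(3,5) unfolding finite_category_def pom_functor_def by blast
  have "finite (profiles D Fo k :: ('a, 'm) profile set)"
    using finite_profiles assms(1,3) unfolding finite_category_def by blast
  moreover have "coherent_presentation k L (profiles D Fo k) fst (\<lambda>m. fst (snd m)) (profile_act D Fm)
      {m \<in> profiles D Fo k. fst m = [] \<and> snd (snd m) {} \<in> K} (profile Fm)"
    using coherent_presentation_profiles assms(2,6) .
  ultimately have "\<exists>(M :: nat set) msrc mtgt act J \<phi>.
      finite M \<and> coherent_presentation k L M msrc mtgt act J \<phi>"
    by (rule finite_coherent_presentation_nat)
  then show ?thesis
    unfolding coherent_presentation_def .
qed

end
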